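(* Let $1\le r\le n$, let $g$ be a real-valued function differentiable on an open neighbourhood of $\mathrm{St}(r,n,\mathbb{C})$ in $\mathbb{C}^{n\times r}$, and let $\tilde g(Z)=g(\sigma(Z))$, where $\sigma$ keeps the first $r$ columns. Let $U_*\in\mathcal{U}_n$ and $X_*=\sigma(U_* )\in\mathrm{St}(r,n,\mathbb{C})$. Then $\operatorname{grad}\tilde g(U_* )=0$ if and only if $\operatorname{grad}g(X_* )=0$.
   Context: $\mathrm{St}(r,n,\mathbb{C})=\{X\in\mathbb{C}^{n\times r}:X^HX=I_r\}$ and $\mathcal{U}_n=\mathrm{St}(n,n,\mathbb{C})$. $\mathbb{C}^{n\times r}$ is a real Euclidean space with inner product $\mathrm{Re}\,\mathrm{tr}(X^HY)$; the Euclidean gradient of a real function $F$ is $\nabla F(X)=\frac{\partial F}{\partial X^{\Re}}+\mathrm{i}\frac{\partial F}{\partial X^{\Im}}$. With $\mathrm{skew}(P)=\frac12(P-P^H)$, the Riemannian gradient on the Stiefel manifold is $\operatorname{grad}g(X)=(I_n-XX^H)\nabla g(X)+X\,\mathrm{skew}(X^H\nabla g(X))$, and on $\mathcal{U}_n$ it is $\operatorname{grad}\tilde g(U)=U\,\mathrm{skew}(U^H\nabla\tilde g(U))$. *)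

theory Defs
  imports "HOL-Analysis.Analysis"
begin

text \<open>Complex matrices with row index type 'a and column index type 'b:
  complex^'b^'a. This is a real Euclidean space whose inner product is
  the sum of Re (cnj x * y) over entries, i.e. Re tr(X^H Y).\<close>

definition cadj :: "complex^'b^'a \<Rightarrow> complex^'a^'b" where
  "cadj A = (\<chi> i j. cnj (A $ j $ i))"

definition stiefel :: "(complex^'r^'n) set" where
  "stiefel = {X. cadj X ** X = mat 1}"

definition unitary_group :: "(complex^'n^'n) set" where
  "unitary_group = stiefel"

definition skew :: "complex^'a^'a \<Rightarrow> complex^'a^'a" where
  "skew P = scaleR (1/2) (P - cadj P)"

definition munit :: "'a \<Rightarrow> 'b \<Rightarrow> complex \<Rightarrow> complex^'b^'a" where
  "munit i j c = (\<chi> a b. if a = i \<and> b = j then c else 0)"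

text \<open>Euclidean gradient: dF/dRe X + i dF/dIm X, entrywise, the partial
  derivatives taken via the (Frechet) derivative of F at X.\<close>
definition egrad :: "(complex^'b^'a \<Rightarrow> real) \<Rightarrow> complex^'b^'a \<Rightarrow> complex^'b^'a" where
  "egrad F X = (\<chi> i j. Complex (frechet_derivative F (at X) (munit i j 1))
                                (frechet_derivative F (at X) (munit i j \<i>)))"

definition rgrad_stiefel :: "(complex^'r^'n \<Rightarrow> real) \<Rightarrow> complex^'r^'n \<Rightarrow> complex^'r^'n" where
  "rgrad_stiefel g X = (mat 1 - X ** cadj X) ** egrad g X + X ** skew (cadj X ** egrad g X)"

definition rgrad_unitary :: "(complex^'n^'n \<Rightarrow> real) \<Rightarrow> complex^'n^'n \<Rightarrow> complex^'n^'n" where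
  "rgrad_unitary g U = U ** skew (cadj U ** egrad g U)"

text \<open>Order-preserving embedding of the column index type 'r onto the initial
  segment of the (linearly ordered, finite) index type 'n: the k-th smallest
  element of 'r goes to the k-th smallest element of 'n.\<close>
definition col_emb :: "'r::{finite,linorder} \<Rightarrow> 'n::{finite,linorder}" where
  "col_emb j = sorted_list_of_set (UNIV :: 'n set) ! card {k. k < j}"

definition sigma :: "((complex, 'n::{finite,linorder}) vec, 'n) vec \<Rightarrow> ((complex, 'r::{finite,linorder}) vec, 'n) vec" where
  "sigma Z = (\<chi> i j. Z $ i $ col_emb j)"

end

theory Submission
  imports Defs
begin

text \<open>Keeping the first r columns is right multiplication by the isometry
  E = col_select, and the Euclidean gradient, being the representative of the derivative
  for the inner product Re tr(X^H Y), transforms by the adjoint: the Euclidean gradient of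
  g \<circ> sigma at U is G E^H with G the Euclidean gradient of g at X = U E.
  At a Stiefel point X the Riemannian gradient vanishes iff G X^H is Hermitian: multiplying
  by X^H kills the normal part and leaves skew (X^H G), and once X^H G is Hermitian the
  vanishing of the normal part says G = X (X^H G).  For a square unitary U the two
  Riemannian gradients coincide, so the unitary gradient of g \<circ> sigma vanishes iff
  G E^H U^H = G X^H is Hermitian.\<close>

lemma cadj_cadj [simp]: "cadj (cadj A) = A"
  by (simp add: cadj_def vec_eq_iff)

lemma cadj_mult: "cadj (A ** B) = cadj B ** cadj (A :: complex^'b^'a)"
  by (simp add: cadj_def matrix_matrix_mult_def vec_eq_iff mult.commute)

lemma skew_eq_0_iff: "skew P = 0 \<longleftrightarrow> cadj P = P"
  by (auto simp: skew_def)

lemma matrix_diff_ldistrib: "A ** (B - C) = A ** B - A ** (C :: 'a::ring_1^'r^'m)"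
  by (simp add: matrix_matrix_mult_def vec_eq_iff algebra_simps sum_subtractf)

lemma matrix_diff_rdistrib: "(A - B) ** (C :: 'a::ring_1^'r^'m) = A ** C - B ** C"
  by (simp add: matrix_matrix_mult_def vec_eq_iff algebra_simps sum_subtractf)

lemma matrix_add_rdistrib: "(A + B) ** (C :: 'a::semiring_1^'r^'m) = A ** C + B ** C"
  by (simp add: matrix_matrix_mult_def vec_eq_iff distrib_right sum.distrib)

lemma matrix_scaleR_mult: "(c *\<^sub>R A) ** (B :: 'a::real_algebra_1^'r^'m) = c *\<^sub>R (A ** B)"
  by (simp add: matrix_matrix_mult_def vec_eq_iff scaleR_sum_right)

lemma unitary_mult_cadj:
  assumes "U \<in> unitary_group"
  shows "U ** cadj U = mat 1"
  using assms by (simp add: unitary_group_def stiefel_def matrix_left_right_inverse)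

lemma unitary_mult_stiefel:
  assumes "U \<in> unitary_group" and "E \<in> stiefel"
  shows "U ** E \<in> stiefel"
proof -
  have "cadj (U ** E) ** (U ** E) = cadj E ** (cadj U ** U) ** E"
    by (simp add: cadj_mult matrix_mul_assoc)
  with assms show ?thesis
    by (simp add: unitary_group_def stiefel_def)
qed

lemma rgrad_unitary_eq_rgrad_stiefel:
  assumes "U \<in> unitary_group"
  shows "rgrad_unitary f U = rgrad_stiefel f U"
  by (simp add: rgrad_unitary_def rgrad_stiefel_def unitary_mult_cadj[OF assms])

lemma stiefel_projection_eq_0_iff:
  assumes "X \<in> stiefel"
  shows "(mat 1 - X ** cadj X) ** G + X ** skew (cadj X ** G) = 0 \<longleftrightarrow> skew (G ** cadj X) = 0"
proof
  have XX: "cadj X ** X = mat 1"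
    using assms by (simp add: stiefel_def)
  assume "(mat 1 - X ** cadj X) ** G + X ** skew (cadj X ** G) = 0"
  moreover have "cadj X ** ((mat 1 - X ** cadj X) ** G + X ** skew (cadj X ** G)) = skew (cadj X ** G)"
    by (simp add: matrix_add_ldistrib matrix_diff_ldistrib matrix_diff_rdistrib
        matrix_mul_assoc XX)
  ultimately have herm: "cadj G ** X = cadj X ** G" and "skew (cadj X ** G) = 0"
    by (simp_all add: skew_eq_0_iff cadj_mult)
  with \<open>(mat 1 - X ** cadj X) ** G + _ = 0\<close> have "G = X ** (cadj X ** G)"
    by (simp add: matrix_diff_rdistrib matrix_mul_assoc)
  then have "G ** cadj X = X ** (cadj X ** G) ** cadj X"
    by (metis matrix_mul_assoc)
  then show "skew (G ** cadj X) = 0"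
    by (simp add: skew_eq_0_iff cadj_mult herm matrix_mul_assoc)
next
  have XX: "cadj X ** X = mat 1"
    using assms by (simp add: stiefel_def)
  assume "skew (G ** cadj X) = 0"
  then have herm: "X ** cadj G = G ** cadj X"
    by (simp add: skew_eq_0_iff cadj_mult)
  have G: "G = X ** (cadj G ** X)"
    by (metis XX herm matrix_mul_assoc matrix_mul_rid)
  then have XG: "cadj X ** G = cadj G ** X"
    by (metis XX matrix_mul_assoc matrix_mul_lid)
  then have "skew (cadj X ** G) = 0"
    by (simp add: skew_eq_0_iff cadj_mult)
  moreover have "X ** cadj X ** G = G"
    using G XG by (metis matrix_mul_assoc)
  ultimately show "(mat 1 - X ** cadj X) ** G + X ** skew (cadj X ** G) = 0"
    by (simp add: matrix_diff_rdistrib)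
qed

lemma rgrad_stiefel_eq_0_iff:
  assumes "X \<in> stiefel"
  shows "rgrad_stiefel g X = 0 \<longleftrightarrow> skew (egrad g X ** cadj X) = 0"
  unfolding rgrad_stiefel_def by (rule stiefel_projection_eq_0_iff[OF assms])

lemma munit_eq_axis: "munit i j c = axis i (axis j c)"
  by (simp add: munit_def axis_def vec_eq_iff)

lemma inner_munit: "inner (munit i j z) G = inner z (G $ i $ j)"
  by (metis inner_axis inner_commute munit_eq_axis)

lemma egrad_eqI:
  assumes "(f has_derivative (\<lambda>H. inner H G)) (at X)"
  shows "egrad f X = G"
  using assms by (simp add: egrad_def inner_munit vec_eq_iff complex_eq_iff
      flip: frechet_derivative_at)

lemma has_derivative_egrad:
  assumes "f differentiable (at X)"
  shows "(f has_derivative (\<lambda>H. inner H (egrad f X))) (at X)"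
proof -
  define D where "D = frechet_derivative f (at X)"
  have fD: "(f has_derivative D) (at X)"
    using assms unfolding D_def frechet_derivative_works .
  have D: "D = (\<lambda>H. inner H (adjoint D 1))"
    using adjoint_works[OF has_derivative_linear[OF fD]] by (simp add: fun_eq_iff)
  with fD have "egrad f X = adjoint D 1"
    by (metis egrad_eqI)
  with fD D show ?thesis by simp
qed

lemma inner_mult_cnj: "inner (x * e) y = inner x (y * cnj (e::complex))"
  by (simp add: inner_complex_def algebra_simps)

lemma inner_mult_right_cadj:
  fixes H :: "complex^'m^'n" and E :: "complex^'r^'m"
  shows "inner (H ** E) G = inner H (G ** cadj E)"
  by (simp add: inner_vec_def matrix_matrix_mult_def cadj_def inner_sum_left inner_sum_right
      inner_mult_cnj sum.swap[where A = "UNIV::'m set"])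

lemma linear_matrix_mult_right: "linear (\<lambda>Z. Z ** (E :: complex^'r^'m))"
  by (rule linearI) (simp_all add: matrix_add_rdistrib matrix_scaleR_mult)

lemma egrad_comp_mult_right:
  fixes g :: "complex^'r^'n \<Rightarrow> real" and E :: "complex^'r^'m"
  assumes "g differentiable (at (X ** E))"
  shows "egrad (\<lambda>Z. g (Z ** E)) X = egrad g (X ** E) ** cadj E"
proof (rule egrad_eqI)
  have "((g \<circ> (\<lambda>Z. Z ** E)) has_derivative (\<lambda>H. inner H (egrad g (X ** E))) \<circ> (\<lambda>Z. Z ** E)) (at X)"
    by (rule diff_chain_at[OF linear_imp_has_derivative[OF linear_matrix_mult_right]
          has_derivative_egrad[OF assms]])
  then show "((\<lambda>Z. g (Z ** E)) has_derivative (\<lambda>H. inner H (egrad g (X ** E) ** cadj E))) (at X)"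
    by (simp add: o_def inner_mult_right_cadj)
qed

lemma col_emb_inj:
  assumes "CARD('r::{finite,linorder}) \<le> CARD('n::{finite,linorder})"
  shows "inj (col_emb :: 'r \<Rightarrow> 'n)"
proof
  fix x y :: 'r
  assume eq: "(col_emb x :: 'n) = col_emb y"
  let ?rank = "\<lambda>j::'r. card {k. k < j}"
  have rank_less: "?rank j < CARD('n)" for j
  proof -
    have "{k. k < j} \<subset> UNIV" by auto
    then have "?rank j < CARD('r)" by (simp add: psubset_card_mono)
    with assms show ?thesis by simp
  qed
  have rank_mono: "a < b \<Longrightarrow> ?rank a < ?rank b" for a b :: 'r
    by (rule psubset_card_mono) (auto intro: order.strict_trans)
  have "distinct (sorted_list_of_set (UNIV :: 'n set))"
    and "length (sorted_list_of_set (UNIV :: 'n set)) = CARD('n)" by auto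
  with eq rank_less have "?rank x = ?rank y"
    unfolding col_emb_def by (simp add: nth_eq_iff_index_eq)
  then show "x = y"
    using rank_mono[of x y] rank_mono[of y x] by (cases x y rule: linorder_cases) auto
qed

definition col_select :: "((complex, 'r::{finite,linorder}) vec, 'n::{finite,linorder}) vec" where
  "col_select = (\<chi> a j. if a = col_emb j then 1 else 0)"

lemma sigma_eq_mult_col_select: "sigma Z = Z ** col_select"
  by (simp add: sigma_def col_select_def matrix_matrix_mult_def vec_eq_iff if_distrib
      if_distribR sum.delta' cong: if_cong)

lemma col_select_in_stiefel:
  assumes "inj (col_emb :: 'r::{finite,linorder} \<Rightarrow> 'n::{finite,linorder})"
  shows "(col_select :: ((complex, 'r) vec, 'n) vec) \<in> stiefel"
  by (simp add: stiefel_def cadj_def col_select_def matrix_matrix_mult_def mat_def vec_eq_iff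
      if_distrib if_distribR inj_eq[OF assms] sum.delta cong: if_cong)

theorem theorem2p7:
  fixes g :: "((complex, 'r::{finite,linorder}) vec, 'n::{finite,linorder}) vec \<Rightarrow> real"
    and S :: "((complex, 'r) vec, 'n) vec set"
    and U :: "((complex, 'n) vec, 'n) vec"
  assumes "CARD('r) \<le> CARD('n)"
    and "open S" and "stiefel \<subseteq> S" and "g differentiable_on S"
    and "U \<in> unitary_group"
  shows "rgrad_unitary (g \<circ> sigma) U = 0 \<longleftrightarrow> rgrad_stiefel g (sigma U) = 0"
proof -
  let ?E = "col_select :: ((complex, 'r) vec, 'n) vec"
  have X: "(sigma U :: ((complex, 'r) vec, 'n) vec) \<in> stiefel"
    unfolding sigma_eq_mult_col_select
    using unitary_mult_stiefel[OF assms(5) col_select_in_stiefel[OF col_emb_inj[OF assms(1)]]] .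
  with assms(2-4) have "g differentiable (at (U ** ?E))"
    by (metis at_within_open differentiable_on_def subsetD sigma_eq_mult_col_select)
  then have "egrad (g \<circ> sigma) U = egrad g (sigma U) ** cadj ?E"
    unfolding o_def sigma_eq_mult_col_select by (rule egrad_comp_mult_right)
  then have "egrad (g \<circ> sigma) U ** cadj U = egrad g (sigma U) ** cadj (sigma U)"
    by (simp add: sigma_eq_mult_col_select cadj_mult matrix_mul_assoc)
  moreover have "U \<in> stiefel"
    using assms(5) by (simp add: unitary_group_def)
  ultimately show ?thesis
    using X by (simp add: rgrad_unitary_eq_rgrad_stiefel[OF assms(5)] rgrad_stiefel_eq_0_iff)
qed

end
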